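(* Let $\varphi(z)\in K(z)$ have degree $d\ge1$, and let $(F,G)$ be a normalized representation of $\varphi$, with $F(X,Y)=\sum_{i=0}^d a_iX^iY^{d-i}$ and $G(X,Y)=\sum_{i=0}^d b_iX^iY^{d-i}$. Then $$\mathrm{GIR}(\varphi)=\max_{i\ne j}\left|\det\begin{pmatrix}a_i&a_j\\ b_i&b_j\end{pmatrix}\right|.$$
   Context: $K$ is a complete, algebraically closed field with a nontrivial nonarchimedean absolute value; $\mathcal O=\{|z|\le1\}$, $\mathcal O^\times$ its units. A normalized representation of $\varphi$ is a pair of homogeneous $F,G\in\mathcal O[X,Y]$ of degree $d$, with no common factor, at least one coefficient in $\mathcal O^\times$, such that $\varphi([X:Y])=[F(X,Y):G(X,Y)]$ (with $z=X/Y$). $\mathbf P^1_{\mathrm{Berk}}$ is the Berkovich projective line over $K$; $\zeta_{a,r}$ is the point corresponding to the disc $D(a,r)=\{z:|z-a|\le r\}$, $\zeta_G=\zeta_{0,1}$. For $x=\zeta_{a,r}$, $r>0$, $\mathrm{diam}_G(x)=r/\max(1,|a|,r)^2$ (equivalently $q^{-\rho(\zeta_G,x)}$ for the logarithmic path metric $\rho$). Gauss Image radius: $\mathrm{GIR}(\varphi)=\mathrm{diam}_G(\varphi(\zeta_G))$. *)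

theory Defs
  imports "HOL-Computational_Algebra.Polynomial"
begin

definition nonarch_abs :: "('a::field \<Rightarrow> real) \<Rightarrow> bool" where
  "nonarch_abs av \<longleftrightarrow>
     (\<forall>x. av x \<ge> 0) \<and> (\<forall>x. av x = 0 \<longleftrightarrow> x = 0) \<and>
     (\<forall>x y. av (x * y) = av x * av y) \<and>
     (\<forall>x y. av (x + y) \<le> max (av x) (av y))"

definition av_nontrivial :: "('a::field \<Rightarrow> real) \<Rightarrow> bool" where
  "av_nontrivial av \<longleftrightarrow> (\<exists>x. av x \<noteq> 0 \<and> av x \<noteq> 1)"

definition av_complete :: "('a::field \<Rightarrow> real) \<Rightarrow> bool" where
  "av_complete av \<longleftrightarrow>
     (\<forall>s :: nat \<Rightarrow> 'a.
        (\<forall>\<epsilon>>0. \<exists>N. \<forall>m\<ge>N. \<forall>n\<ge>N. av (s m - s n) < \<epsilon>) \<longrightarrow>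
        (\<exists>L. \<forall>\<epsilon>>0. \<exists>N. \<forall>n\<ge>N. av (s n - L) < \<epsilon>))"

definition alg_closed :: "'a::field itself \<Rightarrow> bool" where
  "alg_closed _ \<longleftrightarrow> (\<forall>p :: 'a poly. degree p \<ge> 1 \<longrightarrow> (\<exists>z. poly p z = 0))"

definition CNA_field :: "('a::field \<Rightarrow> real) \<Rightarrow> bool" where
  "CNA_field av \<longleftrightarrow> nonarch_abs av \<and> av_nontrivial av \<and> av_complete av \<and> alg_closed TYPE('a)"

text \<open>A homogeneous form of degree e, H(X,Y) = sum c_i X^i Y^(e-i), is represented by its
 dehomogenisation h = H(z,1) (a polynomial of degree at most e) together with e.
 This is a bijection between forms of degree e and polynomials of degree \<le> e,
 and products of forms correspond to products of polynomials (degrees add).\<close>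

definition form_poly :: "(nat \<Rightarrow> 'a::comm_ring_1) \<Rightarrow> nat \<Rightarrow> 'a poly" where
  "form_poly c d = (\<Sum>i\<le>d. monom (c i) i)"

text \<open>H (degree e, dehomogenisation h) divides F (degree d, dehomogenisation f) in K[X,Y]:
 F = H * Q for some form Q of degree d - e.\<close>
definition form_dvd :: "'a::comm_ring_1 poly \<Rightarrow> nat \<Rightarrow> 'a poly \<Rightarrow> nat \<Rightarrow> bool" where
  "form_dvd h e f d \<longleftrightarrow> e \<le> d \<and> (\<exists>q. degree q \<le> d - e \<and> f = h * q)"

text \<open>F, G (forms of degree d) have no common factor: no nonzero form H of degree \<ge> 1
 divides both (every factor of a homogeneous polynomial is homogeneous).\<close>
definition forms_no_common_factor :: "'a::comm_ring_1 poly \<Rightarrow> 'a poly \<Rightarrow> nat \<Rightarrow> bool" where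
  "forms_no_common_factor f g d \<longleftrightarrow>
     \<not> (\<exists>h e. 1 \<le> e \<and> h \<noteq> 0 \<and> degree h \<le> e \<and> form_dvd h e f d \<and> form_dvd h e g d)"

definition normalized_rep :: "('a::field \<Rightarrow> real) \<Rightarrow> nat \<Rightarrow> (nat \<Rightarrow> 'a) \<Rightarrow> (nat \<Rightarrow> 'a) \<Rightarrow> bool" where
  "normalized_rep av d a b \<longleftrightarrow>
     (\<forall>i\<le>d. av (a i) \<le> 1 \<and> av (b i) \<le> 1) \<and>
     (\<exists>i\<le>d. av (a i) = 1 \<or> av (b i) = 1) \<and>
     forms_no_common_factor (form_poly a d) (form_poly b d) d"

definition disc_pt :: "('a::field \<Rightarrow> real) \<Rightarrow> 'a \<Rightarrow> real \<Rightarrow> 'a poly \<Rightarrow> real" where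
  "disc_pt av c r = (\<lambda>g. SUP z\<in>{z. av (z - c) \<le> r}. av (poly g z))"

definition gauss_norm :: "('a::field \<Rightarrow> real) \<Rightarrow> 'a poly \<Rightarrow> real" where
  "gauss_norm av p = (MAX i\<in>{..degree p}. av (coeff p i))"

text \<open>Image of the Gauss point under phi = f/g: the seminorm h \<mapsto> [h o phi]_{zeta_G},
 where h(f/g) = (sum_k h_k f^k g^(n-k)) / g^n with n = deg h.\<close>
definition image_gauss_pt :: "('a::field \<Rightarrow> real) \<Rightarrow> 'a poly \<Rightarrow> 'a poly \<Rightarrow> 'a poly \<Rightarrow> real" where
  "image_gauss_pt av f g = (\<lambda>h.
      gauss_norm av (\<Sum>k\<le>degree h. smult (coeff h k) (f ^ k * g ^ (degree h - k)))
      / gauss_norm av g ^ degree h)"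

definition diam_G :: "('a::field \<Rightarrow> real) \<Rightarrow> ('a poly \<Rightarrow> real) \<Rightarrow> real" where
  "diam_G av x = (THE t. \<exists>c r. r > 0 \<and> x = disc_pt av c r \<and> t = r / (max 1 (max (av c) r))\<^sup>2)"

definition GIR :: "('a::field \<Rightarrow> real) \<Rightarrow> 'a poly \<Rightarrow> 'a poly \<Rightarrow> real" where
  "GIR av f g = diam_G av (image_gauss_pt av f g)"

end

theory Submission
  imports Defs
begin

text \<open>
  By Gauss's lemma, the value of \<open>\<phi>(\<zeta>\<^sub>G)\<close> on \<open>h = lc(h) \<Prod>(T - \<alpha>)\<close> is
  \<open>|lc(h)| \<Prod> \<parallel>F - \<alpha> G\<parallel> / \<parallel>G\<parallel>\<^bsup>deg h\<^esup>\<close>. Choose a coefficient \<open>b\<^sub>k\<close> of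
  maximal absolute value and put \<open>c = a\<^sub>k / b\<^sub>k\<close>, \<open>r = \<parallel>F - c G\<parallel> / \<parallel>G\<parallel>\<close>. The ultrametric
  inequality gives \<open>\<parallel>F - \<alpha> G\<parallel> = \<parallel>G\<parallel> max(r, |c - \<alpha>|)\<close>, which is \<open>\<parallel>G\<parallel>\<close> times the value of
  \<open>\<zeta>(c, r)\<close> on \<open>T - \<alpha>\<close>; so \<open>\<phi>(\<zeta>\<^sub>G) = \<zeta>(c, r)\<close>. Since \<open>\<parallel>F\<parallel> = \<parallel>G\<parallel> max(r, |c|)\<close>, the
  diameter \<open>r / max(1, |c|, r)\<^sup>2\<close> equals \<open>\<parallel>F - c G\<parallel> \<parallel>G\<parallel> / max(\<parallel>F\<parallel>, \<parallel>G\<parallel>)\<^sup>2\<close>, and the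
  denominator is \<open>1\<close> for a normalized representation. Finally \<open>\<parallel>F - c G\<parallel> \<parallel>G\<parallel>\<close> is the largest
  \<open>2 \<times> 2\<close> minor \<open>|a\<^sub>i b\<^sub>j - a\<^sub>j b\<^sub>i|\<close>.
\<close>

lemma coeff_form_poly: "coeff (form_poly a d) i = (if i \<le> d then a i else 0)"
  unfolding form_poly_def by (simp add: coeff_sum coeff_monom)

lemma degree_form_poly: "degree (form_poly a d) \<le> d"
  by (rule degree_le) (simp add: coeff_form_poly)

lemma forms_no_common_factor_sym:
  "forms_no_common_factor f g d \<Longrightarrow> forms_no_common_factor g f d"
  unfolding forms_no_common_factor_def by blast

lemma forms_no_common_factor_not_smult:
  fixes f g :: "'a::comm_ring_1 poly"
  assumes "forms_no_common_factor f g d" "1 \<le> d" "degree g \<le> d"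
  shows "f \<noteq> smult \<gamma> g"
proof
  assume f: "f = smult \<gamma> g"
  show False
  proof (cases "g = 0")
    case True
    then have "form_dvd 1 1 f d" "form_dvd 1 1 g d"
      using f assms(2) unfolding form_dvd_def by auto
    then show False
      using assms(1) unfolding forms_no_common_factor_def by fastforce
  next
    case False
    have "form_dvd g d f d"
      unfolding form_dvd_def using f by (auto intro!: exI[of _ "[:\<gamma>:]"])
    moreover have "form_dvd g d g d"
      unfolding form_dvd_def by (auto intro!: exI[of _ 1])
    ultimately show False
      using assms False unfolding forms_no_common_factor_def by blast
  qed
qed

definition linear_factor :: "'a::comm_ring_1 \<Rightarrow> 'a poly" where
  "linear_factor \<alpha> = [:-\<alpha>, 1:]"

lemma linear_factor_nonzero [simp]: "linear_factor \<alpha> \<noteq> 0"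
  and degree_linear_factor [simp]: "degree (linear_factor \<alpha>) = 1"
  and lead_coeff_linear_factor [simp]: "lead_coeff (linear_factor \<alpha>) = 1"
  and poly_linear_factor [simp]: "poly (linear_factor \<alpha>) z = z - \<alpha>"
  by (simp_all add: linear_factor_def)

lemma prod_linear_factors_nonzero: "prod_list (map linear_factor xs) \<noteq> (0 :: 'a::idom poly)"
  by (induction xs) auto

lemma degree_prod_linear_factors:
  "degree (prod_list (map linear_factor xs)) = length (xs :: 'a::idom list)"
  by (induction xs) (auto simp: degree_mult_eq prod_linear_factors_nonzero)

lemma poly_prod_linear_factors:
  "poly (prod_list (map linear_factor xs)) z = prod_list (map (\<lambda>\<alpha>. z - \<alpha>) xs)"
  by (induction xs) auto

lemma prod_list_map_mult_const:
  "prod_list (map (\<lambda>x. c * f x) xs) = (c :: 'a::comm_monoid_mult) ^ length xs * prod_list (map f xs)"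
  by (induction xs) (simp_all add: mult_ac)

lemma prod_list_mono_nonneg:
  "(\<And>x. x \<in> set xs \<Longrightarrow> 0 \<le> f x \<and> f x \<le> (g x :: real)) \<Longrightarrow>
    0 \<le> prod_list (map f xs) \<and> prod_list (map f xs) \<le> prod_list (map g xs)"
proof (induction xs)
  case (Cons y ys)
  then have "0 \<le> f y" "f y \<le> g y" "0 \<le> prod_list (map f ys)" "prod_list (map f ys) \<le> prod_list (map g ys)"
    by auto
  then show ?case
    by (auto intro: mult_mono)
qed simp

lemma prod_list_eq_1_imp_eq_1:
  assumes "\<And>x. x \<in> set xs \<Longrightarrow> 0 \<le> f x \<and> f x \<le> (1 :: real)"
    and "prod_list (map f xs) = 1" "x \<in> set xs"
  shows "f x = 1"
  using assms
proof (induction xs)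
  case (Cons y ys)
  have "prod_list (map (\<lambda>_. 1) ys) = (1 :: real)"
    by (induction ys) auto
  then have P: "0 \<le> prod_list (map f ys)" "prod_list (map f ys) \<le> 1"
    using Cons.prems(1) prod_list_mono_nonneg[of ys f "\<lambda>_. 1"] by auto
  have fy: "0 \<le> f y" "f y \<le> 1" and prod: "f y * prod_list (map f ys) = 1"
    using Cons.prems(1,2) by auto
  have "f y * prod_list (map f ys) \<le> f y"
    using P fy by (simp add: mult_left_le)
  moreover have "f y * prod_list (map f ys) \<le> prod_list (map f ys)"
    using P fy by (simp add: mult_left_le_one_le)
  ultimately have "f y = 1" "prod_list (map f ys) = 1"
    using prod fy P by linarith+
  then show ?case
    using Cons by auto
qed simp

lemma poly_eq_if_eq_off_zeros:
  fixes p q g :: "'a::idom poly"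
  assumes "infinite (UNIV :: 'a set)" "g \<noteq> 0"
    and "\<And>z. poly g z \<noteq> 0 \<Longrightarrow> poly p z = poly q z"
  shows "p = q"
proof (rule ccontr)
  assume "p \<noteq> q"
  then have "p - q \<noteq> 0"
    by simp
  then have fin: "finite ({z. poly (p - q) z = 0} \<union> {z. poly g z = 0})"
    using poly_roots_finite[of "p - q"] poly_roots_finite[OF assms(2)] by blast
  have "{z. poly (p - q) z = 0} \<union> {z. poly g z = 0} = UNIV"
    using assms(3) by auto
  then show False
    using fin assms(1) by simp
qed

section \<open>Nonarchimedean absolute values and the Gauss norm\<close>

locale nonarch_abs_value =
  fixes av :: "'a::field \<Rightarrow> real"
  assumes nonarch_abs: "nonarch_abs av"
begin

lemma av_nonneg [simp]: "av x \<ge> 0"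
  and av_eq_0_iff [simp]: "av x = 0 \<longleftrightarrow> x = 0"
  and av_mult [simp]: "av (x * y) = av x * av y"
  and av_add_le_max: "av (x + y) \<le> max (av x) (av y)"
  using nonarch_abs unfolding nonarch_abs_def by auto

lemma av_0 [simp]: "av 0 = 0"
  by simp

lemma av_pos_iff [simp]: "av x > 0 \<longleftrightarrow> x \<noteq> 0"
  using av_nonneg[of x] av_eq_0_iff[of x] by linarith

lemma av_one [simp]: "av 1 = 1"
proof -
  have "av 1 = av 1 * av 1"
    using av_mult[of 1 1] by simp
  then show ?thesis
    using av_eq_0_iff[of 1] by (metis mult_cancel_left1 one_neq_zero)
qed

lemma av_minus [simp]: "av (- x) = av x"
proof -
  have "(av (-1) - 1) * (av (-1) + 1) = 0"
    using av_mult[of "-1" "-1"] by (simp add: algebra_simps)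
  moreover have "av (-1) + 1 > 0"
    using av_nonneg[of "-1"] by linarith
  ultimately have "av (-1) = 1" by simp
  then show ?thesis
    using av_mult[of "-1" x] by simp
qed

lemma av_minus_commute: "av (x - y) = av (y - x)"
  by (metis av_minus minus_diff_eq)

lemma av_diff_le_max: "av (x - y) \<le> max (av x) (av y)"
  using av_add_le_max[of x "- y"] by simp

lemma av_inverse [simp]: "av (inverse x) = inverse (av x)"
proof (cases "x = 0")
  case False
  then have "av x * av (inverse x) = 1"
    using av_mult[of x "inverse x"] by simp
  then show ?thesis by (rule inverse_unique[symmetric])
qed simp

lemma av_divide [simp]: "av (x / y) = av x / av y"
  by (simp add: divide_inverse)

lemma av_power [simp]: "av (x ^ n) = av x ^ n"
  by (induction n) auto

lemma av_prod_list: "av (prod_list (map f xs)) = prod_list (map (\<lambda>x. av (f x)) xs)"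
  by (induction xs) auto

lemma av_add_eq_left: "av y < av x \<Longrightarrow> av (x + y) = av x"
  using av_add_le_max[of x y] av_diff_le_max[of "x + y" y] by (simp add: max_def split: if_splits)

lemma av_sum_le:
  "finite A \<Longrightarrow> 0 \<le> M \<Longrightarrow> (\<And>x. x \<in> A \<Longrightarrow> av (f x) \<le> M) \<Longrightarrow> av (sum f A) \<le> M"
  by (induction A rule: finite_induct) (auto intro: order.trans[OF av_add_le_max])

lemma av_sum_less:
  "finite A \<Longrightarrow> 0 < M \<Longrightarrow> (\<And>x. x \<in> A \<Longrightarrow> av (f x) < M) \<Longrightarrow> av (sum f A) < M"
  by (induction A rule: finite_induct) (auto intro: order.strict_trans1[OF av_add_le_max])

lemma gauss_norm_coeff_le: "av (coeff p i) \<le> gauss_norm av p"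
proof (cases "i \<le> degree p")
  case True
  then show ?thesis unfolding gauss_norm_def by (intro Max_ge) auto
next
  case False
  have "av (coeff p 0) \<le> gauss_norm av p"
    unfolding gauss_norm_def by (intro Max_ge) auto
  then have "0 \<le> gauss_norm av p"
    using av_nonneg[of "coeff p 0"] by linarith
  then show ?thesis
    using False by (simp add: coeff_eq_0)
qed

lemma gauss_norm_attained: "\<exists>i\<le>degree p. gauss_norm av p = av (coeff p i)"
proof -
  have "gauss_norm av p \<in> (\<lambda>i. av (coeff p i)) ` {..degree p}"
    unfolding gauss_norm_def by (intro Max_in) auto
  then show ?thesis by auto
qed

lemma gauss_norm_le: "(\<And>i. av (coeff p i) \<le> M) \<Longrightarrow> gauss_norm av p \<le> M"
  using gauss_norm_attained[of p] by auto

lemma gauss_norm_nonneg: "gauss_norm av p \<ge> 0"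
  using gauss_norm_coeff_le[of p 0] av_nonneg[of "coeff p 0"] by linarith

lemma gauss_norm_0 [simp]: "gauss_norm av 0 = 0"
  using gauss_norm_le[of 0 0] gauss_norm_nonneg[of 0] by simp

lemma gauss_norm_1 [simp]: "gauss_norm av 1 = 1"
  unfolding gauss_norm_def by simp

lemma gauss_norm_pos:
  assumes "p \<noteq> 0"
  shows "gauss_norm av p > 0"
proof -
  have "av (lead_coeff p) > 0"
    using assms by simp
  then show ?thesis
    using gauss_norm_coeff_le[of p "degree p"] by linarith
qed

lemma gauss_norm_smult: "gauss_norm av (smult l p) = av l * gauss_norm av p"
proof (rule antisym)
  show "gauss_norm av (smult l p) \<le> av l * gauss_norm av p"
    by (rule gauss_norm_le) (simp add: mult_left_mono gauss_norm_coeff_le)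
  obtain i where "gauss_norm av p = av (coeff p i)"
    using gauss_norm_attained by blast
  then show "av l * gauss_norm av p \<le> gauss_norm av (smult l p)"
    using gauss_norm_coeff_le[of "smult l p" i] by simp
qed

lemma gauss_norm_first_attained:
  "\<exists>i. av (coeff p i) = gauss_norm av p \<and> (\<forall>m<i. av (coeff p m) < gauss_norm av p)"
proof -
  define i where "i = (LEAST i. av (coeff p i) = gauss_norm av p)"
  obtain i0 where "gauss_norm av p = av (coeff p i0)"
    using gauss_norm_attained by blast
  then have "\<exists>i. av (coeff p i) = gauss_norm av p"
    by (intro exI[of _ i0]) simp
  then have "av (coeff p i) = gauss_norm av p"
    unfolding i_def by (rule LeastI_ex)
  moreover have "av (coeff p m) < gauss_norm av p" if "m < i" for m
    using not_less_Least[OF that[unfolded i_def]] gauss_norm_coeff_le[of p m] by linarith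
  ultimately show ?thesis
    by blast
qed

lemma gauss_norm_mult_le: "gauss_norm av (p * q) \<le> gauss_norm av p * gauss_norm av q"
proof (rule gauss_norm_le)
  fix n
  show "av (coeff (p * q) n) \<le> gauss_norm av p * gauss_norm av q"
    unfolding coeff_mult using gauss_norm_nonneg[of p] gauss_norm_nonneg[of q]
    by (intro av_sum_le) (auto intro!: mult_mono gauss_norm_coeff_le)
qed

text \<open>Gauss's lemma: if \<open>i\<close> and \<open>j\<close> are the first indices at which \<open>p\<close> and \<open>q\<close> attain their
  norms, the coefficient of \<open>p q\<close> of index \<open>i + j\<close> has a single dominant term.\<close>
lemma gauss_norm_mult: "gauss_norm av (p * q) = gauss_norm av p * gauss_norm av q"
proof (cases "p = 0 \<or> q = 0")
  case True
  then show ?thesis by auto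
next
  case False
  define P Q where "P = gauss_norm av p" and "Q = gauss_norm av q"
  have P0: "P > 0" and Q0: "Q > 0"
    using False gauss_norm_pos unfolding P_def Q_def by auto
  obtain i where i: "av (coeff p i) = P" "\<And>m. m < i \<Longrightarrow> av (coeff p m) < P"
    using gauss_norm_first_attained[of p] unfolding P_def by blast
  obtain j where j: "av (coeff q j) = Q" "\<And>m. m < j \<Longrightarrow> av (coeff q m) < Q"
    using gauss_norm_first_attained[of q] unfolding Q_def by blast
  have p_le: "av (coeff p m) \<le> P" and q_le: "av (coeff q m) \<le> Q" for m
    unfolding P_def Q_def by (rule gauss_norm_coeff_le)+
  have "av (\<Sum>m\<in>{..i + j} - {i}. coeff p m * coeff q (i + j - m)) < P * Q"
  proof (rule av_sum_less)
    fix m assume "m \<in> {..i + j} - {i}"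
    then consider "m < i" | "i < m" "i + j - m < j" by force
    then show "av (coeff p m * coeff q (i + j - m)) < P * Q"
    proof cases
      case 1
      then show ?thesis
        using i(2)[of m] q_le[of "i + j - m"] Q0
        by (simp add: mult_strict_right_mono order.strict_trans1[OF mult_left_mono])
    next
      case 2
      then show ?thesis
        using j(2)[of "i + j - m"] p_le[of m] P0
        by (simp add: mult_strict_left_mono order.strict_trans1[OF mult_right_mono])
    qed
  qed (use P0 Q0 in auto)
  then have "av (coeff p i * coeff q j + (\<Sum>m\<in>{..i + j} - {i}. coeff p m * coeff q (i + j - m)))
      = P * Q"
    using i(1) j(1) by (subst av_add_eq_left) auto
  then have "av (coeff (p * q) (i + j)) = P * Q"
    by (simp add: coeff_mult sum.remove[of "{..i + j}" i])
  then show ?thesis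
    using gauss_norm_mult_le[of p q] gauss_norm_coeff_le[of "p * q" "i + j"]
    unfolding P_def Q_def by linarith
qed

lemma gauss_norm_prod_list:
  "gauss_norm av (prod_list (map f xs)) = prod_list (map (\<lambda>x. gauss_norm av (f x)) xs)"
  by (induction xs) (simp_all add: gauss_norm_mult)

lemma gauss_norm_pencil_le:
  "gauss_norm av (f - smult \<beta> g) \<le> max (gauss_norm av (f - smult \<gamma> g)) (av (\<gamma> - \<beta>) * gauss_norm av g)"
proof (rule gauss_norm_le)
  fix i
  have e: "coeff (f - smult \<beta> g) i = coeff (f - smult \<gamma> g) i + (\<gamma> - \<beta>) * coeff g i"
    by (simp add: algebra_simps)
  have "av ((\<gamma> - \<beta>) * coeff g i) \<le> av (\<gamma> - \<beta>) * gauss_norm av g"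
    using gauss_norm_coeff_le[of g i] by (simp add: mult_left_mono)
  then show "av (coeff (f - smult \<beta> g) i)
      \<le> max (gauss_norm av (f - smult \<gamma> g)) (av (\<gamma> - \<beta>) * gauss_norm av g)"
    unfolding e using av_add_le_max[of "coeff (f - smult \<gamma> g) i" "(\<gamma> - \<beta>) * coeff g i"]
      gauss_norm_coeff_le[of "f - smult \<gamma> g" i] by linarith
qed

text \<open>\<open>c\<close> cancels a dominant coefficient of \<open>g\<close>, which makes \<open>f - c g\<close> the minimum of the pencil.\<close>
lemma gauss_norm_pencil:
  assumes k: "av (coeff g k) = gauss_norm av g" "coeff g k \<noteq> 0"
    and c: "c = coeff f k / coeff g k"
  shows "gauss_norm av (f - smult \<alpha> g) = max (gauss_norm av (f - smult c g)) (gauss_norm av g * av (c - \<alpha>))"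
proof -
  have "coeff (f - smult \<alpha> g) k = (c - \<alpha>) * coeff g k"
    using k c by (simp add: field_simps)
  then have lower: "gauss_norm av g * av (c - \<alpha>) \<le> gauss_norm av (f - smult \<alpha> g)"
    using gauss_norm_coeff_le[of "f - smult \<alpha> g" k] k by (simp add: mult.commute)
  then have "gauss_norm av (f - smult c g) \<le> gauss_norm av (f - smult \<alpha> g)"
    using gauss_norm_pencil_le[of f c g \<alpha>] av_minus_commute[of \<alpha> c] by (simp add: mult.commute)
  then show ?thesis
    using lower gauss_norm_pencil_le[of f \<alpha> g c] by (simp add: mult.commute)
qed

text \<open>Multiplying the minor by \<open>g\<^sub>k\<close> rewrites it as \<open>D\<^sub>i g\<^sub>j - D\<^sub>j g\<^sub>i\<close> with
  \<open>D = g\<^sub>k (f - c g)\<close>.\<close>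
lemma av_minor_le_gauss_norm_pencil:
  assumes k: "av (coeff g k) = gauss_norm av g" "coeff g k \<noteq> 0"
    and c: "c = coeff f k / coeff g k"
  shows "av (coeff f i * coeff g j - coeff f j * coeff g i) \<le> gauss_norm av (f - smult c g) * gauss_norm av g"
    (is "_ \<le> ?N * ?B")
proof -
  have "av (coeff g k) > 0"
    using k(2) by simp
  then have B0: "?B > 0"
    using k(1) by simp
  have bound: "av (coeff (f - smult c g) i * coeff g k * coeff g j) \<le> ?N * ?B * ?B" for i j
    using k gauss_norm_coeff_le[of "f - smult c g" i] gauss_norm_coeff_le[of g j]
    by (simp add: mult_mono gauss_norm_nonneg)
  have "coeff g k * (coeff f i * coeff g j - coeff f j * coeff g i)
      = coeff (f - smult c g) i * coeff g k * coeff g j - coeff (f - smult c g) j * coeff g k * coeff g i"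
    using c k by (simp add: field_simps)
  then have "av (coeff g k * (coeff f i * coeff g j - coeff f j * coeff g i))
      = av (coeff (f - smult c g) i * coeff g k * coeff g j - coeff (f - smult c g) j * coeff g k * coeff g i)"
    by (rule arg_cong)
  also have "\<dots> \<le> ?N * ?B * ?B"
    using av_diff_le_max bound[of i j] bound[of j i] by (meson max.bounded_iff order.trans)
  finally have "?B * av (coeff f i * coeff g j - coeff f j * coeff g i) \<le> ?B * (?N * ?B)"
    using k by (simp add: mult_ac)
  then show ?thesis
    using B0 by simp
qed

lemma Max_minors_eq_gauss_norm_pencil:
  assumes "degree f \<le> d" "degree g \<le> d"
    and k: "av (coeff g k) = gauss_norm av g" "coeff g k \<noteq> 0"
    and c: "c = coeff f k / coeff g k"
    and "f \<noteq> smult c g"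
  shows "Max {av (coeff f i * coeff g j - coeff f j * coeff g i) | i j. i \<le> d \<and> j \<le> d \<and> i \<noteq> j}
    = gauss_norm av (f - smult c g) * gauss_norm av g"
    (is "Max ?S = ?N * ?B")
proof (rule Max_eqI)
  have "?S \<subseteq> (\<lambda>(i, j). av (coeff f i * coeff g j - coeff f j * coeff g i)) ` ({..d} \<times> {..d})"
    by auto
  then show "finite ?S"
    by (rule finite_subset) simp
  show "y \<le> ?N * ?B" if "y \<in> ?S" for y
    using that av_minor_le_gauss_norm_pencil[OF k c] by blast
  obtain j where j: "?N = av (coeff (f - smult c g) j)"
    using gauss_norm_attained by blast
  have "coeff (f - smult c g) k = 0"
    using c k by simp
  moreover have "coeff (f - smult c g) j \<noteq> 0"
    using j gauss_norm_pos[of "f - smult c g"] \<open>f \<noteq> smult c g\<close> by auto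
  moreover have "degree (f - smult c g) \<le> d"
    using assms(1,2) by (simp add: degree_diff_le)
  ultimately have "j \<noteq> k" "j \<le> d" "k \<le> d"
    using le_degree[of "f - smult c g" j] le_degree[of g k] k(2) assms(2) by auto
  moreover have "coeff f j * coeff g k - coeff f k * coeff g j = coeff (f - smult c g) j * coeff g k"
    using c k by (simp add: field_simps)
  then have "av (coeff f j * coeff g k - coeff f k * coeff g j) = ?N * ?B"
    using j k by simp
  ultimately show "?N * ?B \<in> ?S"
    by force
qed

lemma max_gauss_norm_normalized_rep:
  assumes "normalized_rep av d a b"
  shows "max (gauss_norm av (form_poly a d)) (gauss_norm av (form_poly b d)) = 1"
proof -
  have le1: "gauss_norm av (form_poly a d) \<le> 1" "gauss_norm av (form_poly b d) \<le> 1"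
    using assms unfolding normalized_rep_def
    by (auto intro!: gauss_norm_le simp: coeff_form_poly)
  obtain i where "i \<le> d" "av (a i) = 1 \<or> av (b i) = 1"
    using assms unfolding normalized_rep_def by blast
  then have "1 \<le> gauss_norm av (form_poly a d) \<or> 1 \<le> gauss_norm av (form_poly b d)"
    using gauss_norm_coeff_le[of "form_poly a d" i] gauss_norm_coeff_le[of "form_poly b d" i]
    by (auto simp: coeff_form_poly)
  with le1 show ?thesis
    by linarith
qed

end

section \<open>Algebraically closed nonarchimedean fields\<close>

locale alg_closed_nonarch_abs_value = nonarch_abs_value av for av :: "'a::field \<Rightarrow> real" +
  assumes nontrivial: "av_nontrivial av"
    and alg_closed: "alg_closed TYPE('a)"
begin

lemma poly_has_root: "degree (p :: 'a poly) \<ge> 1 \<Longrightarrow> \<exists>z. poly p z = 0"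
  using alg_closed unfolding alg_closed_def by blast

lemma exists_av_gt_1: "\<exists>y. av y > 1"
proof -
  obtain x where "av x \<noteq> 0" "av x \<noteq> 1"
    using nontrivial unfolding av_nontrivial_def by auto
  then have "av x > 1 \<or> av (inverse x) > 1"
    using av_nonneg[of x] by (auto simp: one_less_inverse_iff)
  then show ?thesis by blast
qed

text \<open>The value group is divisible, hence dense: take an \<open>n\<close>-th root of an element of absolute
  value in \<open>(1, R\<^sup>n)\<close>.\<close>
lemma exists_av_between:
  assumes "R > 1"
  shows "\<exists>y. 1 < av y \<and> av y < R"
proof -
  obtain x where x: "av x > 1"
    using exists_av_gt_1 by blast
  obtain n where n: "av x < R ^ n"
    using real_arch_pow[OF assms] by blast
  then have "n \<ge> 1"
    using x by (cases n) auto
  then have "degree (monom 1 n + [:- x:]) = n"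
    by (simp add: degree_monom_eq degree_add_eq_left)
  then obtain y where "poly (monom 1 n + [:- x:]) y = 0"
    using poly_has_root[of "monom 1 n + [:- x:]"] \<open>n \<ge> 1\<close> by auto
  then have y: "av y ^ n = av x"
    by (simp add: poly_monom flip: av_power)
  have "1 < av y"
  proof (rule ccontr)
    assume "\<not> 1 < av y"
    then have "av y ^ n \<le> 1"
      by (simp add: power_le_one)
    with x y show False
      by simp
  qed
  moreover have "av y < R"
  proof (rule ccontr)
    assume "\<not> av y < R"
    then have "R ^ n \<le> av y ^ n"
      using assms by (simp add: power_mono)
    with n y show False
      by simp
  qed
  ultimately show ?thesis
    by blast
qed

lemma infinite_UNIV: "infinite (UNIV :: 'a set)"
proof -
  obtain y where y: "av y > 1"
    using exists_av_gt_1 by blast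
  have "inj (\<lambda>n::nat. y ^ n)"
  proof (rule injI)
    fix m n :: nat
    assume "y ^ m = y ^ n"
    then have "av y ^ m = av y ^ n"
      by (metis av_power)
    then show "m = n"
      using y by (simp add: power_inject_exp)
  qed
  then have "infinite (range (\<lambda>n::nat. y ^ n))"
    by (rule range_inj_infinite)
  then show ?thesis
    by (meson infinite_super subset_UNIV)
qed

lemma linear_factorization:
  "(h :: 'a poly) \<noteq> 0 \<Longrightarrow> \<exists>xs. h = smult (lead_coeff h) (prod_list (map linear_factor xs)) \<and> length xs = degree h"
proof (induction "degree h" arbitrary: h)
  case 0
  then show ?case
    by (auto elim!: degree_eq_zeroE intro: exI[of _ "[]"])
next
  case (Suc n)
  then obtain \<alpha> where "poly h \<alpha> = 0"
    using poly_has_root[of h] by auto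
  then obtain h' where h: "h = linear_factor \<alpha> * h'"
    unfolding linear_factor_def by (metis poly_eq_0_iff_dvd dvdE)
  with Suc.prems have h': "h' \<noteq> 0" "degree h = Suc (degree h')"
    by (auto simp: degree_mult_eq)
  obtain xs
    where xs: "h' = smult (lead_coeff h') (prod_list (map linear_factor xs))" "length xs = degree h'"
    using Suc.hyps h' by force
  have "h = linear_factor \<alpha> * smult (lead_coeff h') (prod_list (map linear_factor xs))"
    unfolding h by (subst xs(1)) (rule refl)
  moreover have "lead_coeff h = lead_coeff h'"
    unfolding h lead_coeff_mult by (simp only: lead_coeff_linear_factor mult_1)
  ultimately show ?case
    using h'(2) xs(2) by (intro exI[of _ "\<alpha> # xs"]) auto
qed

text \<open>A root \<open>u\<close> of \<open>\<Prod>(z - \<beta>) = 1\<close> works: \<open>|u| > 1\<close> would make the product too large, and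
  a product of numbers in \<open>[0, 1]\<close> equal to \<open>1\<close> has all factors \<open>1\<close>.\<close>
lemma exists_av_diff_eq_1:
  assumes "\<And>\<beta>. \<beta> \<in> set bs \<Longrightarrow> av \<beta> \<le> 1"
  shows "\<exists>u. av u \<le> 1 \<and> (\<forall>\<beta>\<in>set bs. av (u - \<beta>) = 1)"
proof (cases "bs = []")
  case True
  then show ?thesis
    by (intro exI[of _ 0]) auto
next
  case False
  define P where "P = prod_list (map linear_factor bs) + [:-1:]"
  have "degree P = length bs"
    unfolding P_def using False by (simp add: degree_add_eq_left degree_prod_linear_factors)
  then obtain u where "poly P u = 0"
    using poly_has_root[of P] False by (cases bs) auto
  then have "prod_list (map (\<lambda>\<beta>. u - \<beta>) bs) = 1"
    unfolding P_def by (simp add: poly_prod_linear_factors)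
  then have prod1: "prod_list (map (\<lambda>\<beta>. av (u - \<beta>)) bs) = 1"
    by (metis av_one av_prod_list)
  have u: "av u \<le> 1"
  proof (rule ccontr)
    assume u: "\<not> av u \<le> 1"
    then have "av (u - \<beta>) = av u" if "\<beta> \<in> set bs" for \<beta>
      using av_add_eq_left[of "- \<beta>" u] assms[OF that] by simp
    then have "prod_list (map (\<lambda>\<beta>. av (u - \<beta>)) bs) = av u ^ length bs"
      by (simp add: map_idI cong: map_cong flip: prod_list_replicate map_replicate_const)
    moreover have "av u ^ length bs > 1"
      using u False by (simp add: one_less_power)
    ultimately show False
      using prod1 by simp
  qed
  have "0 \<le> av (u - \<beta>) \<and> av (u - \<beta>) \<le> 1" if "\<beta> \<in> set bs" for \<beta>
    using assms[OF that] u av_diff_le_max[of u \<beta>] by simp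
  then have "\<forall>\<beta>\<in>set bs. av (u - \<beta>) = 1"
    using prod_list_eq_1_imp_eq_1[OF _ prod1] by blast
  with u show ?thesis
    by blast
qed

section \<open>Disc points\<close>

lemma disc_pt_linear_factor_le:
  assumes "r > 0"
  shows "disc_pt av c r (linear_factor a) \<le> max r (av (c - a))"
  unfolding disc_pt_def
proof (rule cSUP_least)
  show "{z. av (z - c) \<le> r} \<noteq> {}"
    using assms by (auto intro: exI[of _ c])
  fix z assume "z \<in> {z. av (z - c) \<le> r}"
  then show "av (poly (linear_factor a) z) \<le> max r (av (c - a))"
    using av_add_le_max[of "z - c" "c - a"] by simp
qed

lemma av_le_disc_pt_linear_factor:
  assumes "av (z - c) \<le> r"
  shows "av (z - a) \<le> disc_pt av c r (linear_factor a)"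
proof -
  have "bdd_above ((\<lambda>z. av (poly (linear_factor a) z)) ` {z. av (z - c) \<le> r})"
  proof (rule bdd_aboveI)
    fix y assume "y \<in> (\<lambda>z. av (poly (linear_factor a) z)) ` {z. av (z - c) \<le> r}"
    then obtain z where "av (z - c) \<le> r" "y = av (z - a)"
      by auto
    then show "y \<le> max r (av (c - a))"
      using av_add_le_max[of "z - c" "c - a"] by simp
  qed
  then show ?thesis
    unfolding disc_pt_def using assms by (auto intro: cSUP_upper2)
qed

text \<open>Rescale \<open>exists_av_diff_eq_1\<close> to the disc: \<open>z = c + t u\<close> is at distance exactly \<open>r\<close> from
  every \<open>\<alpha>\<close> inside the disc, and at distance \<open>|c - \<alpha>|\<close> from every \<open>\<alpha>\<close> outside it.\<close>
lemma exists_av_diff_eq_max: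
  assumes t: "av t = r" "r > 0"
  shows "\<exists>z. av (z - c) \<le> r \<and> (\<forall>\<alpha>\<in>set xs. av (z - \<alpha>) = max r (av (c - \<alpha>)))"
proof -
  have t0: "t \<noteq> 0"
    using t by auto
  define ys where "ys = map (\<lambda>\<alpha>. (\<alpha> - c) / t) (filter (\<lambda>\<alpha>. av (c - \<alpha>) \<le> r) xs)"
  have "\<And>\<beta>. \<beta> \<in> set ys \<Longrightarrow> av \<beta> \<le> 1"
    unfolding ys_def using t by (auto simp: av_minus_commute[of _ c])
  then obtain u where u: "av u \<le> 1" "\<forall>\<beta>\<in>set ys. av (u - \<beta>) = 1"
    using exists_av_diff_eq_1 by blast
  define z where "z = c + t * u"
  have "av (z - c) \<le> r"
    unfolding z_def using u t by (simp add: mult_left_le_one_le)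
  moreover have "av (z - \<alpha>) = max r (av (c - \<alpha>))" if "\<alpha> \<in> set xs" for \<alpha>
  proof (cases "av (c - \<alpha>) \<le> r")
    case True
    then have "av (u - (\<alpha> - c) / t) = 1"
      using u that unfolding ys_def by auto
    moreover have "z - \<alpha> = t * (u - (\<alpha> - c) / t)"
      unfolding z_def using t0 by (simp add: field_simps)
    ultimately show ?thesis
      using True t by simp
  next
    case False
    moreover have "r * av u \<le> r"
      using t u by (simp add: mult_right_le_one_le)
    ultimately have "r * av u < av (c - \<alpha>)"
      by linarith
    then have "av (t * u) < av (c - \<alpha>)"
      using t by simp
    then have "av ((c - \<alpha>) + t * u) = av (c - \<alpha>)"
      by (rule av_add_eq_left)
    then show ?thesis
      using False unfolding z_def by (simp add: algebra_simps)
  qed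
  ultimately show ?thesis
    by blast
qed

lemma disc_pt_factored:
  assumes "av t = r" "r > 0"
  shows "disc_pt av c r (smult l (prod_list (map linear_factor xs)))
    = av l * prod_list (map (\<lambda>\<alpha>. max r (av (c - \<alpha>))) xs)"
    (is "disc_pt av c r ?h = ?V")
proof -
  have av_poly: "av (poly ?h z) = av l * prod_list (map (\<lambda>\<alpha>. av (z - \<alpha>)) xs)" for z
    by (simp add: poly_prod_linear_factors av_prod_list)
  have bound: "av (poly ?h z) \<le> ?V" if "av (z - c) \<le> r" for z
  proof -
    have "0 \<le> av (z - \<alpha>) \<and> av (z - \<alpha>) \<le> max r (av (c - \<alpha>))" for \<alpha>
      using av_add_le_max[of "z - c" "c - \<alpha>"] that by simp
    then show ?thesis
      unfolding av_poly
      using prod_list_mono_nonneg[of xs "\<lambda>\<alpha>. av (z - \<alpha>)" "\<lambda>\<alpha>. max r (av (c - \<alpha>))"]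
      by (simp add: mult_left_mono)
  qed
  obtain z where z: "av (z - c) \<le> r" "\<forall>\<alpha>\<in>set xs. av (z - \<alpha>) = max r (av (c - \<alpha>))"
    using exists_av_diff_eq_max[OF assms] by blast
  then have attained: "av (poly ?h z) = ?V"
    unfolding av_poly by (simp cong: map_cong)
  have "(SUP z\<in>{z. av (z - c) \<le> r}. av (poly ?h z)) = ?V"
  proof (rule cSup_eq_maximum)
    show "?V \<in> (\<lambda>z. av (poly ?h z)) ` {z. av (z - c) \<le> r}"
      using attained z(1) by (metis (mono_tags) image_eqI mem_Collect_eq)
  qed (use bound in auto)
  then show ?thesis
    unfolding disc_pt_def .
qed

lemma disc_pt_linear_factor:
  "av t = r \<Longrightarrow> r > 0 \<Longrightarrow> disc_pt av c r (linear_factor a) = max r (av (c - a))"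
  using disc_pt_factored[of t r c 1 "[a]"] by simp

text \<open>A disc point determines its radius and its disc; for the radius the value group must be dense,
  so that the larger disc contains a point at distance strictly between the two radii.\<close>
lemma disc_pt_eq_imp:
  assumes t: "av t = r" "r > 0" and r': "r' > 0"
    and eq: "disc_pt av c r = disc_pt av c' r'"
  shows "r' = r" "av (c - c') \<le> r"
proof -
  have r_le: "max r (av (c - c')) \<le> r'"
    using disc_pt_linear_factor[OF t, of c c'] disc_pt_linear_factor_le[OF r', of c' c'] eq r'
    by simp
  have "av (c' - c) \<le> disc_pt av c' r' (linear_factor c)"
    by (rule av_le_disc_pt_linear_factor) (use r' in simp)
  then show cc': "av (c - c') \<le> r"
    using disc_pt_linear_factor[OF t, of c c] eq av_minus_commute[of c c'] t by simp
  have "\<not> r < r'"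
  proof
    assume "r < r'"
    then obtain y where y: "1 < av y" "av y < r' / r"
      using exists_av_between t by (metis less_divide_eq_1_pos)
    then have "av (t * y) \<le> r'"
      using t by (simp add: field_simps)
    then have "av ((c' + t * y) - c') \<le> disc_pt av c' r' (linear_factor c')"
      by (intro av_le_disc_pt_linear_factor) simp
    also have "\<dots> = r"
      using disc_pt_linear_factor[OF t, of c c'] eq cc' by simp
    finally show False
      using y t by simp
  qed
  then show "r' = r"
    using r_le by simp
qed

lemma diam_G_disc_pt:
  assumes "av t = r" "r > 0"
  shows "diam_G av (disc_pt av c r) = r / (max 1 (max (av c) r))\<^sup>2"
  unfolding diam_G_def
proof (rule the_equality)
  fix T
  assume "\<exists>c' r'. r' > 0 \<and> disc_pt av c r = disc_pt av c' r' \<and> T = r' / (max 1 (max (av c') r'))\<^sup>2"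
  then obtain c' r' where "r' > 0" "disc_pt av c r = disc_pt av c' r'"
    and T: "T = r' / (max 1 (max (av c') r'))\<^sup>2"
    by blast
  with disc_pt_eq_imp[OF assms] have "r' = r" "av (c - c') \<le> r"
    by auto
  moreover have "max (av c') r = max (av c) r"
    using av_diff_le_max[of c "c - c'"] av_add_le_max[of c' "c - c'"] \<open>av (c - c') \<le> r\<close> by simp
  ultimately show "T = r / (max 1 (max (av c) r))\<^sup>2"
    using T by simp
qed (use assms in blast)

section \<open>The image of the Gauss point\<close>

lemma homogenized_comp_linear_factors:
  fixes f g h :: "'a poly"
  assumes g: "g \<noteq> 0"
    and h: "h = smult l (prod_list (map linear_factor xs))" "length xs = degree h"
  shows "(\<Sum>k\<le>degree h. smult (coeff h k) (f ^ k * g ^ (degree h - k)))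
    = smult l (prod_list (map (\<lambda>\<alpha>. f - smult \<alpha> g) xs))"
proof (rule poly_eq_if_eq_off_zeros[OF infinite_UNIV g])
  fix z
  define F G where "F = poly f z" and "G = poly g z"
  assume "poly g z \<noteq> 0"
  then have G: "G \<noteq> 0"
    unfolding G_def .
  have prod_poly: "poly (prod_list (map (\<lambda>\<alpha>. f - smult \<alpha> g) xs)) z = prod_list (map (\<lambda>\<alpha>. F - \<alpha> * G) xs)"
    unfolding F_def G_def by (induction xs) simp_all
  have "G ^ degree h * (F / G) ^ k = F ^ k * G ^ (degree h - k)" if "k \<le> degree h" for k
    using G that by (simp add: power_divide field_simps flip: power_add)
  then have "(\<Sum>k\<le>degree h. coeff h k * (F ^ k * G ^ (degree h - k))) = G ^ degree h * poly h (F / G)"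
    by (simp add: poly_altdef sum_distrib_left mult_ac)
  also have "\<dots> = l * prod_list (map (\<lambda>\<alpha>. G * (F / G - \<alpha>)) xs)"
    using h by (simp add: poly_prod_linear_factors prod_list_map_mult_const)
  also have "\<dots> = l * prod_list (map (\<lambda>\<alpha>. F - \<alpha> * G) xs)"
    using G by (simp add: algebra_simps)
  finally show "poly (\<Sum>k\<le>degree h. smult (coeff h k) (f ^ k * g ^ (degree h - k))) z
      = poly (smult l (prod_list (map (\<lambda>\<alpha>. f - smult \<alpha> g) xs))) z"
    by (simp add: poly_sum prod_poly F_def G_def)
qed

lemma image_gauss_pt_factored:
  fixes f g h :: "'a poly"
  assumes "g \<noteq> 0"
    and "h = smult l (prod_list (map linear_factor xs))" "length xs = degree h"
  shows "image_gauss_pt av f g h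
    = av l * prod_list (map (\<lambda>\<alpha>. gauss_norm av (f - smult \<alpha> g)) xs) / gauss_norm av g ^ degree h"
  unfolding image_gauss_pt_def homogenized_comp_linear_factors[OF assms]
  by (simp only: gauss_norm_smult gauss_norm_prod_list)

lemma image_gauss_pt_eq_disc_pt:
  fixes f g :: "'a poly"
  assumes g: "g \<noteq> 0" and k: "av (coeff g k) = gauss_norm av g"
    and c: "c = coeff f k / coeff g k" and "f \<noteq> smult c g"
  shows "image_gauss_pt av f g = disc_pt av c (gauss_norm av (f - smult c g) / gauss_norm av g)"
proof -
  define B N where "B = gauss_norm av g" and "N = gauss_norm av (f - smult c g)"
  define r where "r = N / B"
  have B0: "B > 0"
    unfolding B_def using gauss_norm_pos[OF g] .
  then have gk: "coeff g k \<noteq> 0"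
    using k unfolding B_def by auto
  have r0: "r > 0"
    using B0 gauss_norm_pos[of "f - smult c g"] \<open>f \<noteq> smult c g\<close> unfolding r_def N_def by simp
  obtain j where "N = av (coeff (f - smult c g) j)"
    using gauss_norm_attained unfolding N_def by blast
  then have t: "av (coeff (f - smult c g) j / coeff g k) = r"
    using k unfolding r_def B_def by simp
  have pencil: "gauss_norm av (f - smult \<alpha> g) = B * max r (av (c - \<alpha>))" for \<alpha>
    using gauss_norm_pencil[OF k gk c, of \<alpha>] B0 unfolding r_def B_def N_def
    by (simp add: max_mult_distrib_left)
  have "image_gauss_pt av f g h = disc_pt av c r h" for h
  proof (cases "h = 0")
    case True
    have "{z. av (z - c) \<le> r} \<noteq> {}"
      using r0 by (auto intro: exI[of _ c])
    then show ?thesis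
      unfolding image_gauss_pt_def disc_pt_def True by simp
  next
    case False
    then obtain xs where xs: "h = smult (lead_coeff h) (prod_list (map linear_factor xs))" "length xs = degree h"
      using linear_factorization by blast
    have "image_gauss_pt av f g h
        = av (lead_coeff h) * prod_list (map (\<lambda>\<alpha>. B * max r (av (c - \<alpha>))) xs) / B ^ degree h"
      unfolding image_gauss_pt_factored[OF g xs] pencil B_def ..
    also have "\<dots> = av (lead_coeff h) * prod_list (map (\<lambda>\<alpha>. max r (av (c - \<alpha>))) xs)"
      using B0 xs(2) by (simp add: prod_list_map_mult_const)
    also have "\<dots> = disc_pt av c r h"
      by (subst xs(1), rule disc_pt_factored[OF t r0, symmetric])
    finally show ?thesis .
  qed
  then show ?thesis
    unfolding r_def N_def B_def by blast
qed

lemma GIR_eq_gauss_norm_pencil: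
  fixes f g :: "'a poly"
  assumes g: "g \<noteq> 0" and k: "av (coeff g k) = gauss_norm av g"
    and c: "c = coeff f k / coeff g k" and "f \<noteq> smult c g"
  shows "GIR av f g
    = gauss_norm av (f - smult c g) * gauss_norm av g / (max (gauss_norm av f) (gauss_norm av g))\<^sup>2"
proof -
  define A B N where "A = gauss_norm av f" and "B = gauss_norm av g" and "N = gauss_norm av (f - smult c g)"
  have B0: "B > 0"
    unfolding B_def using gauss_norm_pos[OF g] .
  then have gk: "coeff g k \<noteq> 0"
    using k unfolding B_def by auto
  have N0: "N > 0"
    unfolding N_def using gauss_norm_pos[of "f - smult c g"] \<open>f \<noteq> smult c g\<close> by simp
  obtain j where "N = av (coeff (f - smult c g) j)"
    using gauss_norm_attained unfolding N_def by blast
  then have t: "av (coeff (f - smult c g) j / coeff g k) = N / B"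
    using k unfolding B_def by simp
  have "A = max N (B * av c)"
    using gauss_norm_pencil[OF k gk c, of 0] unfolding A_def B_def N_def by simp
  then have "B * max 1 (max (av c) (N / B)) = max A B"
    using B0 by (simp add: max_mult_distrib_left max.commute max.left_commute)
  then have max_eq: "max 1 (max (av c) (N / B)) = max A B / B"
    using B0 by (simp add: field_simps)
  have "GIR av f g = diam_G av (disc_pt av c (N / B))"
    using image_gauss_pt_eq_disc_pt[OF assms] unfolding GIR_def N_def B_def by simp
  also have "\<dots> = N / B / (max A B / B)\<^sup>2"
    using B0 N0 by (simp add: diam_G_disc_pt[OF t] max_eq)
  also have "\<dots> = N * B / (max A B)\<^sup>2"
    using B0 by (simp add: power2_eq_square)
  finally show ?thesis
    unfolding A_def B_def N_def .
qed

end

theorem proposition4p4: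
  fixes av :: "'a::field \<Rightarrow> real" and d :: nat and a b :: "nat \<Rightarrow> 'a"
  assumes "CNA_field av"
    and "d \<ge> 1"
    and "normalized_rep av d a b"
  shows "GIR av (form_poly a d) (form_poly b d) =
         Max {av (a i * b j - a j * b i) | i j. i \<le> d \<and> j \<le> d \<and> i \<noteq> j}"
proof -
  interpret alg_closed_nonarch_abs_value av
    using assms(1) unfolding CNA_field_def by unfold_locales auto
  define f g where "f = form_poly a d" and "g = form_poly b d"
  have df: "degree f \<le> d" and dg: "degree g \<le> d"
    unfolding f_def g_def by (rule degree_form_poly)+
  have ncf: "forms_no_common_factor f g d"
    using assms(3) unfolding normalized_rep_def f_def g_def by blast
  have f_g: "f \<noteq> smult \<gamma> g" for \<gamma>
    using forms_no_common_factor_not_smult[OF ncf assms(2) dg] .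
  have g0: "g \<noteq> 0"
    using forms_no_common_factor_not_smult[OF forms_no_common_factor_sym[OF ncf] assms(2) df, of 0]
    by simp
  obtain k where k: "av (coeff g k) = gauss_norm av g"
    using gauss_norm_attained[of g] by (metis)
  then have gk: "coeff g k \<noteq> 0"
    using gauss_norm_pos[OF g0] by auto
  define c where "c = coeff f k / coeff g k"
  have max1: "max (gauss_norm av f) (gauss_norm av g) = 1"
    unfolding f_def g_def by (rule max_gauss_norm_normalized_rep[OF assms(3)])
  have "GIR av f g = gauss_norm av (f - smult c g) * gauss_norm av g"
    using GIR_eq_gauss_norm_pencil[OF g0 k c_def f_g] max1 by simp
  also have "\<dots> = Max {av (coeff f i * coeff g j - coeff f j * coeff g i) | i j. i \<le> d \<and> j \<le> d \<and> i \<noteq> j}"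
    by (rule Max_minors_eq_gauss_norm_pencil[OF df dg k gk c_def f_g, symmetric])
  also have "{av (coeff f i * coeff g j - coeff f j * coeff g i) | i j. i \<le> d \<and> j \<le> d \<and> i \<noteq> j}
      = {av (a i * b j - a j * b i) | i j. i \<le> d \<and> j \<le> d \<and> i \<noteq> j}"
    unfolding f_def g_def coeff_form_poly by (intro Collect_cong) auto
  finally show ?thesis
    unfolding f_def g_def .
qed

end
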